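(* Let $\mathcal{C}$ be a DC circuit whose elements are ideal DC voltage sources, resistors (with positive finite resistances), capacitors and/or inductors, with arbitrary topology, and suppose $\mathcal{C}$ is in a DC steady state. Let $\mathcal{C}^+$ be the circuit obtained from $\mathcal{C}$ by adding one new link consisting of a resistor with positive resistance between two nodes of $\mathcal{C}$, and suppose $\mathcal{C}^+$ is also in a DC steady state. Let $\mathrm{Loss}'$ and $\mathrm{Loss}$ denote the total steady-state resistive losses $\sum I^2R$ (sum over all resistors) of $\mathcal{C}$ and $\mathcal{C}^+$ respectively. Then $\mathrm{Loss}\ge\mathrm{Loss}'$; that is, the steady-state Loss Cost of the Link $\mathrm{LCL}=\mathrm{Loss}/\mathrm{Loss}'$ satisfies $\mathrm{LCL}\ge1$.
   Context: A circuit is modeled as a finite graph whose nodes are points where two or more circuit elements meet and whose links each carry one element. In a DC steady state, node potentials and branch currents satisfy Kirchhoff's current and voltage laws, each resistor obeys Ohm's law $V=IR$, each voltage source imposes a fixed potential difference across its link, each capacitor carries zero current (acts as an open circuit), and each inductor has zero voltage drop (acts as a short circuit). The Loss Cost of the Link (LCL) is the ratio of the total network resistive loss after adding a link to the total network resistive loss before adding it. *)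

theory Defs
  imports Complex_Main
begin

text \<open>Circuit elements. A link l with endpoints ends l = (u, v) carries current i l
  from u to v; the voltage across it is p u - p v.\<close>
datatype element =
    VSource real
  | is_Resistor: Resistor (res: real)
  | Capacitor                    \<comment> \<open>DC: open circuit, i = 0\<close>
  | Inductor                     \<comment> \<open>DC: short circuit, p u - p v = 0\<close>

definition circuit :: "'n set \<Rightarrow> 'l set \<Rightarrow> ('l \<Rightarrow> 'n \<times> 'n) \<Rightarrow> ('l \<Rightarrow> element) \<Rightarrow> bool" where
  "circuit N L ends el \<longleftrightarrow>
     finite N \<and> finite L \<and>
     (\<forall>l\<in>L. fst (ends l) \<in> N \<and> snd (ends l) \<in> N) \<and>
     (\<forall>l\<in>L. is_Resistor (el l) \<longrightarrow> res (el l) > 0) \<and>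
     (\<forall>v\<in>N. 2 \<le> card {l\<in>L. fst (ends l) = v \<or> snd (ends l) = v})"

text \<open>DC steady state with node potentials p and branch currents i
  (KVL holds automatically since voltages are potential differences).\<close>
definition steady_state :: "'n set \<Rightarrow> 'l set \<Rightarrow> ('l \<Rightarrow> 'n \<times> 'n) \<Rightarrow> ('l \<Rightarrow> element)
    \<Rightarrow> ('n \<Rightarrow> real) \<Rightarrow> ('l \<Rightarrow> real) \<Rightarrow> bool" where
  "steady_state N L ends el p i \<longleftrightarrow>
     (\<forall>v\<in>N. (\<Sum>l\<in>{l\<in>L. fst (ends l) = v}. i l) = (\<Sum>l\<in>{l\<in>L. snd (ends l) = v}. i l)) \<and>
     (\<forall>l\<in>L. (case el l of
         VSource V \<Rightarrow> p (fst (ends l)) - p (snd (ends l)) = V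
       | Resistor R \<Rightarrow> p (fst (ends l)) - p (snd (ends l)) = i l * R
       | Capacitor \<Rightarrow> i l = 0
       | Inductor \<Rightarrow> p (fst (ends l)) - p (snd (ends l)) = 0))"

definition loss :: "'l set \<Rightarrow> ('l \<Rightarrow> element) \<Rightarrow> ('l \<Rightarrow> real) \<Rightarrow> real" where
  "loss L el i = (\<Sum>l\<in>{l\<in>L. is_Resistor (el l)}. (i l)^2 * res (el l))"

text \<open>The circuit with one added link: old links are Some l, the new link is None.\<close>
definition plus_links :: "'l set \<Rightarrow> 'l option set" where
  "plus_links L = insert None (Some ` L)"

definition plus_ends :: "('l \<Rightarrow> 'n \<times> 'n) \<Rightarrow> 'n \<Rightarrow> 'n \<Rightarrow> 'l option \<Rightarrow> 'n \<times> 'n" where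
  "plus_ends ends a b = (\<lambda>x. case x of None \<Rightarrow> (a, b) | Some l \<Rightarrow> ends l)"

definition plus_el :: "('l \<Rightarrow> element) \<Rightarrow> real \<Rightarrow> 'l option \<Rightarrow> element" where
  "plus_el el R0 = (\<lambda>x. case x of None \<Rightarrow> Resistor R0 | Some l \<Rightarrow> el l)"

end

theory Submission
  imports Defs
begin

text \<open>Let \<open>i\<close> be the currents of \<open>\<C>\<close> and \<open>j\<close> the currents of \<open>\<C>\<^sup>+\<close> on the old links.
  Tellegen's theorem for \<open>i\<close> against the potential change \<open>p' - p\<close> gives
  \<open>\<Sum> i (j - i) R = 0\<close> over the resistors: a voltage source or an inductor has the same voltage
  in both states and a capacitor carries no current, so only resistors contribute.
  Hence \<open>\<Sum> j\<^sup>2 R = \<Sum> i\<^sup>2 R + \<Sum> (j - i)\<^sup>2 R \<ge> \<Sum> i\<^sup>2 R\<close>, and the new resistor only adds loss.\<close>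

definition dc_law :: "element \<Rightarrow> real \<Rightarrow> real \<Rightarrow> bool" where
  "dc_law e u c \<longleftrightarrow> (case e of
       VSource V \<Rightarrow> u = V
     | Resistor R \<Rightarrow> u = c * R
     | Capacitor \<Rightarrow> c = 0
     | Inductor \<Rightarrow> u = 0)"

lemma steady_state_dc_law:
  assumes "steady_state N L ends el p i" and "l \<in> L"
  shows "dc_law (el l) (p (fst (ends l)) - p (snd (ends l))) (i l)"
  using assms by (auto simp: steady_state_def dc_law_def)

lemma steady_state_kcl:
  assumes "steady_state N L ends el p i" and "v \<in> N"
  shows "(\<Sum>l\<in>{l\<in>L. fst (ends l) = v}. i l) = (\<Sum>l\<in>{l\<in>L. snd (ends l) = v}. i l)"
  using assms by (simp add: steady_state_def)

lemma dc_law_cross_power: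
  assumes "dc_law e u c" and "dc_law e u' c'"
  shows "c * (u' - u) = (if is_Resistor e then c * (c' - c) * res e else 0)"
  using assms by (cases e) (auto simp: dc_law_def algebra_simps)

lemma sum_links_by_node:
  fixes i :: "'l \<Rightarrow> 'a::semiring_0" and q :: "'n \<Rightarrow> 'a"
  assumes "finite N" and "finite L" and "f ` L \<subseteq> N"
  shows "(\<Sum>l\<in>L. i l * q (f l)) = (\<Sum>v\<in>N. (\<Sum>l\<in>{l\<in>L. f l = v}. i l) * q v)"
proof -
  have "(\<Sum>l\<in>L. i l * q (f l)) = (\<Sum>v\<in>N. \<Sum>l\<in>{l\<in>L. f l = v}. i l * q (f l))"
    using sum.group[OF assms(2,1,3), of "\<lambda>l. i l * q (f l)"] by simp
  also have "\<dots> = (\<Sum>v\<in>N. (\<Sum>l\<in>{l\<in>L. f l = v}. i l) * q v)"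
    by (intro sum.cong refl) (auto simp: sum_distrib_right intro: sum.cong)
  finally show ?thesis .
qed

theorem tellegen:
  fixes i :: "'l \<Rightarrow> 'a::ring" and q :: "'n \<Rightarrow> 'a"
  assumes "finite N" and "finite L"
    and ends: "\<forall>l\<in>L. fst (ends l) \<in> N \<and> snd (ends l) \<in> N"
    and kcl: "\<forall>v\<in>N. (\<Sum>l\<in>{l\<in>L. fst (ends l) = v}. i l) = (\<Sum>l\<in>{l\<in>L. snd (ends l) = v}. i l)"
  shows "(\<Sum>l\<in>L. i l * (q (fst (ends l)) - q (snd (ends l)))) = 0"
proof -
  have "(\<lambda>l. fst (ends l)) ` L \<subseteq> N" "(\<lambda>l. snd (ends l)) ` L \<subseteq> N"
    using ends by auto
  from sum_links_by_node[OF assms(1,2) this(1)] sum_links_by_node[OF assms(1,2) this(2)]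
  have "(\<Sum>l\<in>L. i l * q (fst (ends l))) = (\<Sum>l\<in>L. i l * q (snd (ends l)))"
    using kcl by (metis (no_types, lifting) sum.cong)
  then show ?thesis by (simp add: right_diff_distrib sum_subtractf)
qed

lemma resistor_cross_power_zero:
  assumes "finite N" and "finite L"
    and "\<forall>l\<in>L. fst (ends l) \<in> N \<and> snd (ends l) \<in> N"
    and "steady_state N L ends el p i"
    and law': "\<forall>l\<in>L. dc_law (el l) (p' (fst (ends l)) - p' (snd (ends l))) (j l)"
  shows "(\<Sum>l\<in>{l\<in>L. is_Resistor (el l)}. i l * (j l - i l) * res (el l)) = 0"
proof -
  let ?u = "\<lambda>p l. p (fst (ends l)) - p (snd (ends l))"
  have link: "i l * (?u p' l - ?u p l) = (if is_Resistor (el l) then i l * (j l - i l) * res (el l) else 0)"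
    if "l \<in> L" for l
    using dc_law_cross_power steady_state_dc_law[OF assms(4) that] law' that by blast
  have "(\<Sum>l\<in>{l\<in>L. is_Resistor (el l)}. i l * (j l - i l) * res (el l))
      = (\<Sum>l\<in>L. i l * (?u p' l - ?u p l))"
    using assms(2) by (simp add: sum.inter_filter link cong: sum.cong)
  also have "\<dots> = (\<Sum>l\<in>L. i l * (?u (\<lambda>v. p' v - p v) l))"
    by (simp add: algebra_simps)
  also have "\<dots> = 0"
    using steady_state_kcl[OF assms(4)] by (intro tellegen[OF assms(1-3)]) blast
  finally show ?thesis .
qed

lemma loss_steady_state_le:
  assumes "finite N" and "finite L"
    and "\<forall>l\<in>L. fst (ends l) \<in> N \<and> snd (ends l) \<in> N"
    and "\<forall>l\<in>L. is_Resistor (el l) \<longrightarrow> res (el l) \<ge> 0"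
    and "steady_state N L ends el p i"
    and "\<forall>l\<in>L. dc_law (el l) (p' (fst (ends l)) - p' (snd (ends l))) (j l)"
  shows "loss L el i \<le> loss L el j"
proof -
  let ?R = "{l\<in>L. is_Resistor (el l)}"
  have "loss L el j = (\<Sum>l\<in>?R. (i l)\<^sup>2 * res (el l) + (j l - i l)\<^sup>2 * res (el l)
                                + 2 * (i l * (j l - i l) * res (el l)))"
    unfolding loss_def by (rule sum.cong) (simp_all add: power2_eq_square algebra_simps)
  also have "\<dots> = loss L el i + (\<Sum>l\<in>?R. (j l - i l)\<^sup>2 * res (el l))"
    using resistor_cross_power_zero[OF assms(1-3,5,6)]
    by (simp add: loss_def sum.distrib sum_distrib_left[symmetric])
  also have "\<dots> \<ge> loss L el i"
    using assms(4) by (auto intro!: sum_nonneg)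
  finally show ?thesis .
qed

lemma loss_plus_links_ge:
  assumes "finite L" and "R0 \<ge> 0"
  shows "loss L el (i' \<circ> Some) \<le> loss (plus_links L) (plus_el el R0) i'"
proof -
  have "{x \<in> plus_links L. is_Resistor (plus_el el R0 x)}
      = insert None (Some ` {l\<in>L. is_Resistor (el l)})"
    by (auto simp: plus_links_def plus_el_def)
  then show ?thesis
    using assms by (simp add: loss_def plus_el_def sum.reindex)
qed

theorem proposition5:
  fixes N :: "'n set" and L :: "'l set" and ends :: "'l \<Rightarrow> 'n \<times> 'n"
    and el :: "'l \<Rightarrow> element" and a b :: 'n and R0 :: real
    and p p' :: "'n \<Rightarrow> real" and i :: "'l \<Rightarrow> real" and i' :: "'l option \<Rightarrow> real"
  assumes "circuit N L ends el"
    and "a \<in> N" and "b \<in> N" and "a \<noteq> b" and "R0 > 0"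
    and "steady_state N L ends el p i"
    and "steady_state N (plus_links L) (plus_ends ends a b) (plus_el el R0) p' i'"
  shows "loss (plus_links L) (plus_el el R0) i' \<ge> loss L el i"
proof -
  have circ: "finite N" "finite L" "\<forall>l\<in>L. fst (ends l) \<in> N \<and> snd (ends l) \<in> N"
      "\<forall>l\<in>L. is_Resistor (el l) \<longrightarrow> res (el l) \<ge> 0"
    using assms(1) by (auto simp: circuit_def less_imp_le)
  have "\<forall>l\<in>L. dc_law (el l) (p' (fst (ends l)) - p' (snd (ends l))) ((i' \<circ> Some) l)"
    using steady_state_dc_law[OF assms(7)]
    by (force simp: plus_links_def plus_ends_def plus_el_def)
  then have "loss L el i \<le> loss L el (i' \<circ> Some)"
    by (rule loss_steady_state_le[OF circ assms(6)])
  also have "\<dots> \<le> loss (plus_links L) (plus_el el R0) i'"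
    using loss_plus_links_ge[OF circ(2)] assms(5) by simp
  finally show ?thesis .
qed

end
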